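(* For any algorithm for the problem of RL with once-per-episode feedback, there exists a $\tilde d_{\mathbb{P}}$-dimensional linear mixture MDP with a $\tilde d_{\mathbb{G}}$-dimensional linear feedback function such that the regret incurred by this algorithm over $K$ episodes is at least $\Omega(\tilde d_{\mathbb{P}}\sqrt{K}+\tilde d_{\mathbb{G}}\sqrt{K})$.
   Context: RL with once-per-episode feedback: episodic MDP $(\mathcal{S},\mathcal{A},H,\mathbb{P})$ with fixed initial state $s_1$, trajectories $\tau=(s_1,a_1,\dots,s_H,a_H)$. In each episode $k=1,\dots,K$ the agent runs a (history-dependent) policy $\pi_k$, obtains a trajectory $\tau_k$, and at the end receives feedback $y_k\in\{0,1\}$ determined by an unknown function $g^*:\mathrm{Traj}\to[0,1]$ of the trajectory ($g^*(\tau_k)$ is the mean of $y_k$). $V^\pi_1(s_1)=\mathbb{E}_{\tau\sim(\mathbb{P},\pi)}g^*(\tau)$, $V^*_1(s_1)=\max_\pi V_1^\pi(s_1)$, regret $Reg(K)=\sum_{k=1}^K(V^*_1(s_1)-V^{\pi_k}_1(s_1))$. A $\tilde d_{\mathbb{P}}$-dimensional linear mixture MDP has $\mathbb{P}(s'|s,a)=\psi(s,a,s')^\top\theta$ for a known feature map $\psi:\mathcal{S}\times\mathcal{A}\times\mathcal{S}\to\mathbb{R}^{\tilde d_{\mathbb{P}}}$ with $\|\sum_{s'}\psi(s,a,s')V(s')\|_2\le1$ for all $V:\mathcal{S}\to[0,1]$, and an unknown $\theta$ of bounded norm. A $\tilde d_{\mathbb{G}}$-dimensional linear feedback function is $g^*(\tau)=\phi(\tau)^\top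 w$ for a known feature map $\phi:\mathrm{Traj}\to\mathbb{R}^{\tilde d_{\mathbb{G}}}$ and an unknown bounded vector $w$. *)

theory Defs
  imports "HOL-Probability.Probability"
begin

text \<open>States and actions are natural numbers; an instance has state space
  {0..<nS}, action space {0..<nA}, horizon H and initial state s1.
  A trajectory is the list [(s_1,a_1),...,(s_H,a_H)].
  Vectors of dimension d are functions nat => real, only indices < d matter.\<close>

type_synonym traj = "(nat \<times> nat) list"

text \<open>A (history-dependent, randomized) within-episode policy: given the partial
  trajectory so far and the current state, a distribution over actions.\<close>
type_synonym policy = "traj \<Rightarrow> nat \<Rightarrow> nat pmf"

text \<open>Known information given to the algorithm:
  (dP, dG, nS, nA, H, s1, psi, phi).\<close>
type_synonym info =
  "nat \<times> nat \<times> nat \<times> nat \<times> nat \<times> nat \<times> (nat \<Rightarrow> nat \<Rightarrow> nat \<Rightarrow> nat \<Rightarrow> real) \<times> (traj \<Rightarrow> nat \<Rightarrow> real)"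

text \<open>An algorithm: from known information and the history of past episodes
  (trajectory, binary feedback) it chooses the policy of the next episode.\<close>
type_synonym algorithm = "info \<Rightarrow> (traj \<times> bool) list \<Rightarrow> policy"

definition vnorm :: "nat \<Rightarrow> (nat \<Rightarrow> real) \<Rightarrow> real" where
  "vnorm d x = sqrt (\<Sum>i<d. (x i)\<^sup>2)"

text \<open>Running one episode of H steps. Actions outside the action space are
  replaced by action 0 (convention).\<close>
primrec run_episode ::
  "(nat \<Rightarrow> nat \<Rightarrow> nat pmf) \<Rightarrow> nat \<Rightarrow> policy \<Rightarrow> nat \<Rightarrow> traj \<Rightarrow> nat \<Rightarrow> traj pmf" where
  "run_episode P nA pol 0 tr s = return_pmf tr"
| "run_episode P nA pol (Suc n) tr s =
     bind_pmf (pol tr s) (\<lambda>a0.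
       let a = (if a0 < nA then a0 else 0); tr' = tr @ [(s, a)] in
       if n = 0 then return_pmf tr'
       else bind_pmf (P s a) (\<lambda>s'. run_episode P nA pol n tr' s'))"

definition value_of ::
  "(nat \<Rightarrow> nat \<Rightarrow> nat pmf) \<Rightarrow> nat \<Rightarrow> nat \<Rightarrow> nat \<Rightarrow> (traj \<Rightarrow> real) \<Rightarrow> policy \<Rightarrow> real" where
  "value_of P nA H s1 g pol = measure_pmf.expectation (run_episode P nA pol H [] s1) g"

definition opt_value ::
  "(nat \<Rightarrow> nat \<Rightarrow> nat pmf) \<Rightarrow> nat \<Rightarrow> nat \<Rightarrow> nat \<Rightarrow> (traj \<Rightarrow> real) \<Rightarrow> real" where
  "opt_value P nA H s1 g = (SUP pol. value_of P nA H s1 g pol)"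

primrec interact ::
  "(nat \<Rightarrow> nat \<Rightarrow> nat pmf) \<Rightarrow> nat \<Rightarrow> nat \<Rightarrow> nat \<Rightarrow> (traj \<Rightarrow> real)
     \<Rightarrow> ((traj \<times> bool) list \<Rightarrow> policy) \<Rightarrow> nat \<Rightarrow> (traj \<times> bool) list pmf" where
  "interact P nA H s1 g Alg 0 = return_pmf []"
| "interact P nA H s1 g Alg (Suc k) =
     bind_pmf (interact P nA H s1 g Alg k) (\<lambda>h.
       bind_pmf (run_episode P nA (Alg h) H [] s1) (\<lambda>tr.
         bind_pmf (bernoulli_pmf (g tr)) (\<lambda>y. return_pmf (h @ [(tr, y)]))))"

definition regret ::
  "(nat \<Rightarrow> nat \<Rightarrow> nat pmf) \<Rightarrow> nat \<Rightarrow> nat \<Rightarrow> nat \<Rightarrow> (traj \<Rightarrow> real)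
     \<Rightarrow> ((traj \<times> bool) list \<Rightarrow> policy) \<Rightarrow> nat \<Rightarrow> (traj \<times> bool) list \<Rightarrow> real" where
  "regret P nA H s1 g Alg K h =
     (\<Sum>k<K. opt_value P nA H s1 g - value_of P nA H s1 g (Alg (take k h)))"

definition expected_regret ::
  "(nat \<Rightarrow> nat \<Rightarrow> nat pmf) \<Rightarrow> nat \<Rightarrow> nat \<Rightarrow> nat \<Rightarrow> (traj \<Rightarrow> real)
     \<Rightarrow> ((traj \<times> bool) list \<Rightarrow> policy) \<Rightarrow> nat \<Rightarrow> real" where
  "expected_regret P nA H s1 g Alg K =
     measure_pmf.expectation (interact P nA H s1 g Alg K) (regret P nA H s1 g Alg K)"

definition linear_mixture ::
  "nat \<Rightarrow> nat \<Rightarrow> nat \<Rightarrow> (nat \<Rightarrow> nat \<Rightarrow> nat \<Rightarrow> nat \<Rightarrow> real) \<Rightarrow> (nat \<Rightarrow> real)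
     \<Rightarrow> (nat \<Rightarrow> nat \<Rightarrow> nat pmf) \<Rightarrow> real \<Rightarrow> bool" where
  "linear_mixture dP nS nA psi theta P B \<longleftrightarrow>
     (\<forall>s<nS. \<forall>a<nA. set_pmf (P s a) \<subseteq> {..<nS} \<and>
        (\<forall>s'<nS. pmf (P s a) s' = (\<Sum>i<dP. psi s a s' i * theta i))) \<and>
     (\<forall>s<nS. \<forall>a<nA. \<forall>V::nat \<Rightarrow> real. (\<forall>s'<nS. 0 \<le> V s' \<and> V s' \<le> 1) \<longrightarrow>
        vnorm dP (\<lambda>i. \<Sum>s'<nS. psi s a s' i * V s') \<le> 1) \<and>
     vnorm dP theta \<le> B"

definition valid_traj :: "nat \<Rightarrow> nat \<Rightarrow> nat \<Rightarrow> traj \<Rightarrow> bool" where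
  "valid_traj nS nA H tr \<longleftrightarrow> length tr = H \<and> (\<forall>(s, a) \<in> set tr. s < nS \<and> a < nA)"

definition lin_feedback :: "nat \<Rightarrow> (traj \<Rightarrow> nat \<Rightarrow> real) \<Rightarrow> (nat \<Rightarrow> real) \<Rightarrow> traj \<Rightarrow> real" where
  "lin_feedback dG phi w tr = (\<Sum>i<dG. phi tr i * w i)"

definition linear_feedback ::
  "nat \<Rightarrow> nat \<Rightarrow> nat \<Rightarrow> nat \<Rightarrow> (traj \<Rightarrow> nat \<Rightarrow> real) \<Rightarrow> (nat \<Rightarrow> real) \<Rightarrow> real \<Rightarrow> bool" where
  "linear_feedback dG nS nA H phi w B \<longleftrightarrow>
     (\<forall>tr. valid_traj nS nA H tr \<longrightarrow> 0 \<le> lin_feedback dG phi w tr \<and> lin_feedback dG phi w tr \<le> 1) \<and>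
     vnorm dG w \<le> B"

end

theory Submission
  imports Defs
begin

text \<open>Assouad's method. The hidden parameter w < 2^m and the actions a < 2^m are bit
  strings, and the chance of a positive signal is 1/2 + c <sign a, sign w> with
  c = 1/(4 sqrt K); every wrong bit of the first action then costs 2c of value. Flipping one
  bit of w changes the law of an episode only to Hellinger affinity 1 - 1/(4K), so after K
  episodes the affinity of the two interaction laws is still at least a constant and, by
  Le Cam's inequality, no algorithm learns the bit. Averaged over the hypercube, some w
  forces regret m sqrt K / 16. The parameter is hidden either in the feedback weights of a
  one-state, one-step MDP (d_G = m + 1) or in the transition kernel of a two-step MDP whose
  feedback rewards reaching state 1 (d_P = m + 1); the larger dimension gives the bound.\<close>

section \<open>Hellinger affinity\<close>

definition hellinger_affinity :: "'a set \<Rightarrow> 'a pmf \<Rightarrow> 'a pmf \<Rightarrow> real" where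
  "hellinger_affinity S p q = (\<Sum>x\<in>S. sqrt (pmf p x * pmf q x))"

lemma sum_sqrt_mult_le:
  fixes f g :: "'a \<Rightarrow> real"
  assumes "\<And>x. x \<in> S \<Longrightarrow> 0 \<le> f x" "\<And>x. x \<in> S \<Longrightarrow> 0 \<le> g x"
  shows "(\<Sum>x\<in>S. sqrt (f x * g x)) \<le> sqrt ((\<Sum>x\<in>S. f x) * (\<Sum>x\<in>S. g x))"
proof (rule real_le_rsqrt)
  have "(\<Sum>x\<in>S. sqrt (f x * g x))\<^sup>2 = (\<Sum>x\<in>S. sqrt (f x) * sqrt (g x))\<^sup>2"
    by (simp add: real_sqrt_mult)
  also have "\<dots> \<le> (\<Sum>x\<in>S. (sqrt (f x))\<^sup>2) * (\<Sum>x\<in>S. (sqrt (g x))\<^sup>2)"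
    by (rule Cauchy_Schwarz_ineq_sum)
  also have "\<dots> = (\<Sum>x\<in>S. f x) * (\<Sum>x\<in>S. g x)"
    using assms by (simp cong: sum.cong)
  finally show "(\<Sum>x\<in>S. sqrt (f x * g x))\<^sup>2 \<le> (\<Sum>x\<in>S. f x) * (\<Sum>x\<in>S. g x)" .
qed

lemma expectation_finite_support:
  fixes f :: "'a \<Rightarrow> real"
  assumes "finite S" "set_pmf p \<subseteq> S"
  shows "measure_pmf.expectation p f = (\<Sum>x\<in>S. pmf p x * f x)"
  using integral_measure_pmf[OF assms(1), of p f] assms(2) by auto

lemma pmf_bind_finite_support:
  assumes "finite S" "set_pmf p \<subseteq> S"
  shows "pmf (bind_pmf p k) y = (\<Sum>x\<in>S. pmf p x * pmf (k x) y)"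
  unfolding pmf_bind by (rule expectation_finite_support[OF assms])

lemma expectation_bind_pmf_finite:
  fixes h :: "'b \<Rightarrow> real"
  assumes "finite A" "set_pmf p \<subseteq> A" "\<And>x. x \<in> A \<Longrightarrow> finite (set_pmf (k x))"
  shows "measure_pmf.expectation (bind_pmf p k) h
    = measure_pmf.expectation p (\<lambda>x. measure_pmf.expectation (k x) h)"
  using pmf_expectation_bind[of A k p h] assms
    expectation_finite_support[OF assms(1,2), of "\<lambda>x. measure_pmf.expectation (k x) h"]
  by simp

lemma hellinger_affinity_nonneg: "0 \<le> hellinger_affinity S p q"
  unfolding hellinger_affinity_def by (rule sum_nonneg) simp

lemma hellinger_affinity_self:
  assumes "finite S" "set_pmf p \<subseteq> S"
  shows "hellinger_affinity S p p = 1"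
  unfolding hellinger_affinity_def using sum_pmf_eq_1[OF assms] by simp

lemma hellinger_affinity_bind_ge:
  assumes S: "finite S" "set_pmf p \<subseteq> S" "set_pmf q \<subseteq> S"
    and "\<And>x. x \<in> S \<Longrightarrow> \<beta> \<le> hellinger_affinity T (k1 x) (k2 x)"
  shows "\<beta> * hellinger_affinity S p q \<le> hellinger_affinity T (bind_pmf p k1) (bind_pmf q k2)"
proof -
  have "\<beta> * hellinger_affinity S p q = (\<Sum>x\<in>S. sqrt (pmf p x * pmf q x) * \<beta>)"
    unfolding hellinger_affinity_def by (simp add: sum_distrib_left ac_simps)
  also have "\<dots> \<le> (\<Sum>x\<in>S. sqrt (pmf p x * pmf q x) * hellinger_affinity T (k1 x) (k2 x))"
    by (intro sum_mono mult_left_mono) (use assms(4) in auto)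
  also have "\<dots> = (\<Sum>y\<in>T. \<Sum>x\<in>S. sqrt ((pmf p x * pmf (k1 x) y) * (pmf q x * pmf (k2 x) y)))"
    unfolding hellinger_affinity_def sum_distrib_left
    by (subst sum.swap) (simp add: real_sqrt_mult[symmetric] ac_simps)
  also have "\<dots> \<le> (\<Sum>y\<in>T. sqrt ((\<Sum>x\<in>S. pmf p x * pmf (k1 x) y) * (\<Sum>x\<in>S. pmf q x * pmf (k2 x) y)))"
    by (intro sum_mono sum_sqrt_mult_le) auto
  also have "\<dots> = hellinger_affinity T (bind_pmf p k1) (bind_pmf q k2)"
    unfolding hellinger_affinity_def
    by (simp add: pmf_bind_finite_support[OF S(1,2)] pmf_bind_finite_support[OF S(1,3)])
  finally show ?thesis .
qed

lemma hellinger_affinity_le_bind_kernel: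
  assumes "finite S" "set_pmf p \<subseteq> S" "set_pmf q \<subseteq> S" "finite T"
    and "\<And>x. x \<in> S \<Longrightarrow> set_pmf (k x) \<subseteq> T"
  shows "hellinger_affinity S p q \<le> hellinger_affinity T (bind_pmf p k) (bind_pmf q k)"
  using hellinger_affinity_bind_ge[OF assms(1-3), of 1 T k k] hellinger_affinity_self[OF assms(4,5)]
  by simp

lemma hellinger_affinity_bind_kernels_ge:
  assumes "finite S" "set_pmf p \<subseteq> S"
    and "\<And>x. x \<in> S \<Longrightarrow> \<beta> \<le> hellinger_affinity T (k1 x) (k2 x)"
  shows "\<beta> \<le> hellinger_affinity T (bind_pmf p k1) (bind_pmf p k2)"
  using hellinger_affinity_bind_ge[OF assms(1,2,2,3)] hellinger_affinity_self[OF assms(1,2)]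
  by simp

text \<open>Le Cam's two-point inequality. As pmf p * pmf q = min * max, Cauchy-Schwarz bounds the
  squared affinity by twice the overlap sum of min (pmf p)
    (pmf q), and every test pays the overlap.\<close>
lemma hellinger_affinity_square_le:
  fixes f :: "'a \<Rightarrow> real"
  assumes S: "finite S" "set_pmf p \<subseteq> S" "set_pmf q \<subseteq> S"
    and f: "\<And>x. x \<in> S \<Longrightarrow> 0 \<le> f x \<and> f x \<le> 1"
  shows "(hellinger_affinity S p q)\<^sup>2 / 2
    \<le> measure_pmf.expectation p f + measure_pmf.expectation q (\<lambda>x. 1 - f x)"
proof -
  define lo where "lo x = min (pmf p x) (pmf q x)" for x
  define hi where "hi x = max (pmf p x) (pmf q x)" for x
  have "hellinger_affinity S p q = (\<Sum>x\<in>S. sqrt (lo x * hi x))"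
    unfolding hellinger_affinity_def lo_def hi_def
    by (intro sum.cong) (auto simp: min_def max_def ac_simps)
  also have "\<dots> \<le> sqrt ((\<Sum>x\<in>S. lo x) * (\<Sum>x\<in>S. hi x))"
    by (rule sum_sqrt_mult_le) (auto simp: lo_def hi_def max_def)
  finally have "(hellinger_affinity S p q)\<^sup>2 \<le> (sqrt ((\<Sum>x\<in>S. lo x) * (\<Sum>x\<in>S. hi x)))\<^sup>2"
    using hellinger_affinity_nonneg by (rule power_mono)
  also have "\<dots> = (\<Sum>x\<in>S. lo x) * (\<Sum>x\<in>S. hi x)"
    by (simp add: lo_def hi_def sum_nonneg max.coboundedI1)
  also have "\<dots> \<le> (\<Sum>x\<in>S. lo x) * 2"
  proof (rule mult_left_mono)
    have "(\<Sum>x\<in>S. hi x) \<le> (\<Sum>x\<in>S. pmf p x + pmf q x)"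
      by (rule sum_mono) (auto simp: hi_def)
    also have "\<dots> = 2"
      using sum_pmf_eq_1[OF S(1,2)] sum_pmf_eq_1[OF S(1,3)] by (simp add: sum.distrib)
    finally show "(\<Sum>x\<in>S. hi x) \<le> 2" .
  qed (simp add: lo_def sum_nonneg)
  also have "(\<Sum>x\<in>S. lo x) \<le> (\<Sum>x\<in>S. pmf p x * f x + pmf q x * (1 - f x))"
  proof (rule sum_mono)
    fix x assume "x \<in> S"
    with f have "lo x * f x \<le> pmf p x * f x" "lo x * (1 - f x) \<le> pmf q x * (1 - f x)"
      by (auto intro!: mult_right_mono simp: lo_def)
    then show "lo x \<le> pmf p x * f x + pmf q x * (1 - f x)" by (simp add: algebra_simps)
  qed
  finally show ?thesis
    by (simp add: expectation_finite_support[OF S(1,2)] expectation_finite_support[OF S(1,3)]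
        sum.distrib)
qed

lemma hellinger_affinity_bool:
  "hellinger_affinity UNIV p q = sqrt (pmf p True * pmf q True) + sqrt (pmf p False * pmf q False)"
  unfolding hellinger_affinity_def by (simp add: UNIV_bool)

lemma sqrt_diff_square_le:
  fixes x y :: real
  assumes "1/4 \<le> x" "1/4 \<le> y"
  shows "(sqrt x - sqrt y)\<^sup>2 \<le> (x - y)\<^sup>2"
proof -
  have "sqrt (1/4) = (1/2 :: real)"
    by (simp add: real_sqrt_divide)
  then have "1 \<le> sqrt x + sqrt y"
    using real_sqrt_le_mono[OF assms(1)] real_sqrt_le_mono[OF assms(2)] by linarith
  then have "(sqrt x - sqrt y)\<^sup>2 * 1 \<le> (sqrt x - sqrt y)\<^sup>2 * (sqrt x + sqrt y)\<^sup>2"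
    by (intro mult_left_mono) (simp_all add: one_le_power)
  also have "\<dots> = (x - y)\<^sup>2"
    using assms by (simp add: power_mult_distrib[symmetric] algebra_simps power2_eq_square)
  finally show ?thesis by simp
qed

lemma hellinger_affinity_bernoulli_ge:
  fixes p q \<delta> :: real
  assumes p: "1/4 \<le> p" "p \<le> 3/4" and q: "1/4 \<le> q" "q \<le> 3/4" and "\<bar>p - q\<bar> \<le> \<delta>"
  shows "1 - \<delta>\<^sup>2 \<le> hellinger_affinity UNIV (bernoulli_pmf p) (bernoulli_pmf q)"
proof -
  have mean: "sqrt (x * y) = (x + y - (sqrt x - sqrt y)\<^sup>2) / 2" if "0 \<le> x" "0 \<le> y" for x y :: real
    using that by (simp add: power2_diff real_sqrt_mult)
  have "(p - q)\<^sup>2 \<le> \<delta>\<^sup>2"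
    using power_mono[OF assms(5), of 2] by simp
  moreover have "(sqrt p - sqrt q)\<^sup>2 \<le> (p - q)\<^sup>2" "(sqrt (1 - p) - sqrt (1 - q))\<^sup>2 \<le> (p - q)\<^sup>2"
    using sqrt_diff_square_le[of p q] sqrt_diff_square_le[of "1 - p" "1 - q"] p q
    by (simp_all add: power2_commute)
  moreover have "hellinger_affinity UNIV (bernoulli_pmf p) (bernoulli_pmf q)
      = (p + q - (sqrt p - sqrt q)\<^sup>2) / 2
        + ((1 - p) + (1 - q) - (sqrt (1 - p) - sqrt (1 - q))\<^sup>2) / 2"
    using p q by (simp add: hellinger_affinity_bool mean)
  ultimately show ?thesis
    by (simp add: field_simps)
qed

section \<open>Episodes and histories\<close>

definition transitions_within :: "nat \<Rightarrow> nat \<Rightarrow> (nat \<Rightarrow> nat \<Rightarrow> nat pmf) \<Rightarrow> bool" where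
  "transitions_within nS nA P \<longleftrightarrow> (\<forall>s<nS. \<forall>a<nA. set_pmf (P s a) \<subseteq> {..<nS})"

definition trajs :: "nat \<Rightarrow> nat \<Rightarrow> nat \<Rightarrow> traj set" where
  "trajs nS nA H = {tr. valid_traj nS nA H tr}"

definition histories :: "nat \<Rightarrow> nat \<Rightarrow> nat \<Rightarrow> nat \<Rightarrow> (traj \<times> bool) list set" where
  "histories nS nA H k = {h. set h \<subseteq> trajs nS nA H \<times> UNIV \<and> length h = k}"

lemma trajs_eq: "trajs nS nA H = {tr. set tr \<subseteq> {..<nS} \<times> {..<nA} \<and> length tr = H}"
  unfolding trajs_def valid_traj_def by auto

lemma finite_trajs: "finite (trajs nS nA H)"
  unfolding trajs_eq by (rule finite_lists_length_eq) auto

lemma finite_histories: "finite (histories nS nA H k)"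
  unfolding histories_def by (rule finite_lists_length_eq) (auto simp: finite_trajs)

lemma set_pmf_run_episode_prefix:
  assumes P: "transitions_within nS nA P" and "0 < nA"
  shows "s < nS \<Longrightarrow> set tr \<subseteq> {..<nS} \<times> {..<nA} \<Longrightarrow>
    set_pmf (run_episode P nA pol n tr s)
      \<subseteq> {tr'. set tr' \<subseteq> {..<nS} \<times> {..<nA} \<and> length tr' = length tr + n}"
proof (induction n arbitrary: tr s)
  case 0
  then show ?case by simp
next
  case (Suc n)
  have step: "set x \<subseteq> {..<nS} \<times> {..<nA} \<and> length x = length tr + Suc n"
    if "a < nA" "s' \<in> set_pmf (P s a)" "x \<in> set_pmf (run_episode P nA pol n (tr @ [(s, a)]) s')"
    for a s' x
    using Suc.IH[of s' "tr @ [(s, a)]"] Suc.prems that P by (auto simp: transitions_within_def)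
  show ?case
    using Suc.prems \<open>0 < nA\<close> by (fastforce simp: Let_def split: if_splits dest: step[rotated 2])
qed

lemma set_pmf_run_episode:
  assumes "transitions_within nS nA P" "0 < nA" "s1 < nS"
  shows "set_pmf (run_episode P nA pol H [] s1) \<subseteq> trajs nS nA H"
  using set_pmf_run_episode_prefix[OF assms, of "[]" pol H] by (simp add: trajs_eq)

definition episode_pmf ::
  "(nat \<Rightarrow> nat \<Rightarrow> nat pmf) \<Rightarrow> nat \<Rightarrow> nat \<Rightarrow> nat \<Rightarrow> (traj \<Rightarrow> real) \<Rightarrow> policy
     \<Rightarrow> (traj \<times> bool) list \<Rightarrow> (traj \<times> bool) list pmf" where
  "episode_pmf P nA H s1 g pol h =
     bind_pmf (run_episode P nA pol H [] s1) (\<lambda>tr.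
       bind_pmf (bernoulli_pmf (g tr)) (\<lambda>y. return_pmf (h @ [(tr, y)])))"

lemma interact_Suc_episode_pmf:
  "interact P nA H s1 g Alg (Suc k) =
     bind_pmf (interact P nA H s1 g Alg k) (\<lambda>h. episode_pmf P nA H s1 g (Alg h) h)"
  by (simp add: episode_pmf_def)

lemma set_pmf_episode_pmf:
  assumes "transitions_within nS nA P" "0 < nA" "s1 < nS" "h \<in> histories nS nA H k"
  shows "set_pmf (episode_pmf P nA H s1 g pol h) \<subseteq> histories nS nA H (Suc k)"
  using set_pmf_run_episode[OF assms(1-3), THEN subsetD] assms(4)
  by (auto simp: episode_pmf_def histories_def)

lemma set_pmf_interact:
  assumes "transitions_within nS nA P" "0 < nA" "s1 < nS"
  shows "set_pmf (interact P nA H s1 g Alg k) \<subseteq> histories nS nA H k"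
proof (induction k)
  case 0
  then show ?case by (simp add: histories_def)
next
  case (Suc k)
  then show ?case
    unfolding interact_Suc_episode_pmf set_bind_pmf
    using set_pmf_episode_pmf[OF assms] by blast
qed

lemma episode_pmf_affinity_ge:
  assumes P1: "transitions_within nS nA P1" and P2: "transitions_within nS nA P2"
    and "0 < nA" "s1 < nS" and h: "h \<in> histories nS nA H k"
    and traj: "\<alpha> \<le> hellinger_affinity (trajs nS nA H)
      (run_episode P1 nA pol H [] s1) (run_episode P2 nA pol H [] s1)"
    and feedback: "\<And>tr. tr \<in> trajs nS nA H \<Longrightarrow>
      \<beta> \<le> hellinger_affinity UNIV (bernoulli_pmf (g1 tr)) (bernoulli_pmf (g2 tr))"
    and "0 \<le> \<beta>"
  shows "\<alpha> * \<beta> \<le> hellinger_affinity (histories nS nA H (Suc k))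
    (episode_pmf P1 nA H s1 g1 pol h) (episode_pmf P2 nA H s1 g2 pol h)"
proof -
  have "\<beta> \<le> hellinger_affinity (histories nS nA H (Suc k))
      (bind_pmf (bernoulli_pmf (g1 tr)) (\<lambda>y. return_pmf (h @ [(tr, y)])))
      (bind_pmf (bernoulli_pmf (g2 tr)) (\<lambda>y. return_pmf (h @ [(tr, y)])))"
    if tr: "tr \<in> trajs nS nA H" for tr
  proof -
    have "hellinger_affinity UNIV (bernoulli_pmf (g1 tr)) (bernoulli_pmf (g2 tr))
      \<le> hellinger_affinity (histories nS nA H (Suc k))
        (bind_pmf (bernoulli_pmf (g1 tr)) (\<lambda>y. return_pmf (h @ [(tr, y)])))
        (bind_pmf (bernoulli_pmf (g2 tr)) (\<lambda>y. return_pmf (h @ [(tr, y)])))"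
      using h tr
      by (intro hellinger_affinity_le_bind_kernel finite_histories) (auto simp: histories_def)
    with feedback[OF tr] show ?thesis
      by (rule order_trans)
  qed
  then have "\<beta> * hellinger_affinity (trajs nS nA H)
      (run_episode P1 nA pol H [] s1) (run_episode P2 nA pol H [] s1)
    \<le> hellinger_affinity (histories nS nA H (Suc k))
      (episode_pmf P1 nA H s1 g1 pol h) (episode_pmf P2 nA H s1 g2 pol h)"
    unfolding episode_pmf_def
    using set_pmf_run_episode[OF P1 \<open>0 < nA\<close> \<open>s1 < nS\<close>]
      set_pmf_run_episode[OF P2 \<open>0 < nA\<close> \<open>s1 < nS\<close>]
    by (intro hellinger_affinity_bind_ge finite_trajs) auto
  moreover have "\<beta> * \<alpha> \<le> \<beta> * hellinger_affinity (trajs nS nA H)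
      (run_episode P1 nA pol H [] s1) (run_episode P2 nA pol H [] s1)"
    using traj \<open>0 \<le> \<beta>\<close> by (rule mult_left_mono)
  ultimately show ?thesis
    by (simp add: mult.commute)
qed

lemma interact_affinity_ge:
  assumes P1: "transitions_within nS nA P1" and P2: "transitions_within nS nA P2"
    and "0 < nA" "s1 < nS"
    and traj: "\<And>pol. \<alpha> \<le> hellinger_affinity (trajs nS nA H)
      (run_episode P1 nA pol H [] s1) (run_episode P2 nA pol H [] s1)"
    and feedback: "\<And>tr. tr \<in> trajs nS nA H \<Longrightarrow>
      \<beta> \<le> hellinger_affinity UNIV (bernoulli_pmf (g1 tr)) (bernoulli_pmf (g2 tr))"
    and "0 \<le> \<alpha>" "0 \<le> \<beta>"
  shows "(\<alpha> * \<beta>) ^ k \<le> hellinger_affinity (histories nS nA H k)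
    (interact P1 nA H s1 g1 Alg k) (interact P2 nA H s1 g2 Alg k)"
proof (induction k)
  case 0
  have "histories nS nA H 0 = {[]}"
    by (auto simp: histories_def)
  then show ?case
    by (simp add: hellinger_affinity_self)
next
  case (Suc k)
  have "(\<alpha> * \<beta>) * hellinger_affinity (histories nS nA H k)
      (interact P1 nA H s1 g1 Alg k) (interact P2 nA H s1 g2 Alg k)
    \<le> hellinger_affinity (histories nS nA H (Suc k))
      (interact P1 nA H s1 g1 Alg (Suc k)) (interact P2 nA H s1 g2 Alg (Suc k))"
    unfolding interact_Suc_episode_pmf
    using set_pmf_interact[OF P1 \<open>0 < nA\<close> \<open>s1 < nS\<close>] set_pmf_interact[OF P2 \<open>0 < nA\<close> \<open>s1 < nS\<close>]
      episode_pmf_affinity_ge[OF P1 P2 \<open>0 < nA\<close> \<open>s1 < nS\<close> _ traj feedback \<open>0 \<le> \<beta>\<close>]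
    by (intro hellinger_affinity_bind_ge finite_histories) auto
  moreover have "(\<alpha> * \<beta>) ^ Suc k \<le> (\<alpha> * \<beta>) * hellinger_affinity (histories nS nA H k)
      (interact P1 nA H s1 g1 Alg k) (interact P2 nA H s1 g2 Alg k)"
    using Suc.IH \<open>0 \<le> \<alpha>\<close> \<open>0 \<le> \<beta>\<close> by (simp add: mult_left_mono)
  ultimately show ?case
    by linarith
qed

section \<open>Assouad's method\<close>

lemma flip_bit_less_two_power:
  fixes w :: nat
  assumes "w < 2 ^ m" "j < m"
  shows "flip_bit j w < 2 ^ m"
proof -
  have "take_bit m w = w"
    using assms(1) by (simp add: take_bit_nat_eq_self_iff)
  then have "take_bit m (flip_bit j w) = flip_bit j w"
    using assms(2) by (simp add: take_bit_flip_bit_eq)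
  then show ?thesis
    by (simp only: take_bit_nat_eq_self_iff)
qed

lemma flip_bit_flip_bit: "flip_bit j (flip_bit j w) = (w :: nat)"
  by (rule bit_eqI) (auto simp: bit_flip_bit_iff)

lemma bij_betw_flip_bit:
  assumes "j < m"
  shows "bij_betw (flip_bit j) {..<2 ^ m :: nat} {..<2 ^ m}"
  by (rule bij_betw_byWitness[where f' = "flip_bit j"])
    (auto simp: flip_bit_flip_bit flip_bit_less_two_power assms)

lemma ex_ge_average:
  fixes f :: "'a \<Rightarrow> real"
  assumes "finite A" "A \<noteq> {}" "real (card A) * c \<le> (\<Sum>x\<in>A. f x)"
  shows "\<exists>x\<in>A. c \<le> f x"
  using sum_bounded_above_strict[of A f c] assms by (force simp: card_gt_0_iff not_le)

lemma hypercube_expectation_sum_ge: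
  fixes p :: "nat \<Rightarrow> 'a pmf" and f :: "nat \<Rightarrow> 'a \<Rightarrow> real"
  assumes S: "finite S" "\<And>w. w < 2 ^ m \<Longrightarrow> set_pmf (p w) \<subseteq> S" and "j < m"
    and f: "\<And>w x. w < 2 ^ m \<Longrightarrow> x \<in> S \<Longrightarrow> 0 \<le> f w x \<and> f w x \<le> 1"
    and flip: "\<And>w x. w < 2 ^ m \<Longrightarrow> f (flip_bit j w) x = 1 - f w x"
    and close: "\<And>w. w < 2 ^ m \<Longrightarrow> b \<le> hellinger_affinity S (p w) (p (flip_bit j w))"
    and "0 \<le> b"
  shows "2 ^ m * b\<^sup>2 / 4 \<le> (\<Sum>w<2 ^ m. measure_pmf.expectation (p w) (f w))"
proof -
  let ?E = "\<lambda>w. measure_pmf.expectation (p w) (f w)"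
  have pair: "b\<^sup>2 / 2 \<le> ?E w + ?E (flip_bit j w)" if w: "w < 2 ^ m" for w
  proof -
    have "b\<^sup>2 / 2 \<le> (hellinger_affinity S (p w) (p (flip_bit j w)))\<^sup>2 / 2"
      using power_mono[OF close[OF w] \<open>0 \<le> b\<close>, of 2] by simp
    also have "\<dots> \<le> ?E w + measure_pmf.expectation (p (flip_bit j w)) (\<lambda>x. 1 - f w x)"
      using w S f flip_bit_less_two_power[OF w \<open>j < m\<close>]
      by (intro hellinger_affinity_square_le) auto
    also have "(\<lambda>x. 1 - f w x) = f (flip_bit j w)"
      using flip[OF w] by auto
    finally show ?thesis .
  qed
  have "(\<Sum>w<2 ^ m. ?E (flip_bit j w)) = (\<Sum>w<2 ^ m. ?E w)"
    using sum.reindex_bij_betw[OF bij_betw_flip_bit[OF \<open>j < m\<close>], of ?E] by simp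
  moreover have "(\<Sum>w<(2::nat) ^ m. b\<^sup>2 / 2) \<le> (\<Sum>w<2 ^ m. ?E w + ?E (flip_bit j w))"
    using pair by (intro sum_mono) simp
  ultimately show ?thesis
    by (simp add: sum.distrib)
qed

definition first_action :: "nat \<Rightarrow> policy \<Rightarrow> nat \<Rightarrow> nat pmf" where
  "first_action nA pol s1 = map_pmf (\<lambda>a. if a < nA then a else 0) (pol [] s1)"

definition bit_error :: "nat \<Rightarrow> nat \<Rightarrow> nat \<Rightarrow> nat \<Rightarrow> policy \<Rightarrow> real" where
  "bit_error nA s1 w j pol = measure_pmf.prob (first_action nA pol s1) {a. bit a j \<noteq> bit w j}"

lemma bit_error_flip_bit: "bit_error nA s1 (flip_bit j w) j pol = 1 - bit_error nA s1 w j pol"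
proof -
  have flipped: "{a. bit a j \<noteq> bit (flip_bit j w) j} = UNIV - {a. bit a j \<noteq> bit w j}"
    by (auto simp: bit_flip_bit_iff)
  show ?thesis
    unfolding bit_error_def flipped
    using measure_pmf.prob_compl[of "{a. bit a j \<noteq> bit w j}" "first_action nA pol s1"] by simp
qed

lemma bit_error_bounds: "0 \<le> bit_error nA s1 w j pol \<and> bit_error nA s1 w j pol \<le> 1"
  by (simp add: bit_error_def)

lemma expected_regret_ge_bit_errors:
  assumes "transitions_within nS nA P" "0 < nA" "s1 < nS"
    and gap: "\<And>pol. \<gamma> * (\<Sum>j<m. bit_error nA s1 w j pol)
      \<le> opt_value P nA H s1 g - value_of P nA H s1 g pol"
  shows "\<gamma> * (\<Sum>k<K. \<Sum>j<m. measure_pmf.expectation (interact P nA H s1 g A K)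
      (\<lambda>h. bit_error nA s1 w j (A (take k h)))) \<le> expected_regret P nA H s1 g A K"
proof -
  let ?p = "interact P nA H s1 g A K"
  have int: "integrable (measure_pmf ?p) f" for f :: "_ \<Rightarrow> real"
    using set_pmf_interact[OF assms(1-3)] finite_histories
    by (intro integrable_measure_pmf_finite) (rule finite_subset)
  have "\<gamma> * (\<Sum>k<K. \<Sum>j<m. measure_pmf.expectation ?p (\<lambda>h. bit_error nA s1 w j (A (take k h))))
      = measure_pmf.expectation ?p (\<lambda>h. \<Sum>k<K. \<gamma> * (\<Sum>j<m. bit_error nA s1 w j (A (take k h))))"
    by (simp add: int sum_distrib_left)
  also have "\<dots> \<le> expected_regret P nA H s1 g A K"
    unfolding expected_regret_def regret_def
    by (intro integral_mono int sum_mono gap)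
  finally show ?thesis .
qed

lemma hypercube_regret_lower_bound:
  fixes P :: "nat \<Rightarrow> nat \<Rightarrow> nat \<Rightarrow> nat pmf" and g :: "nat \<Rightarrow> traj \<Rightarrow> real"
  assumes nA: "nA = 2 ^ m" and "s1 < nS"
    and trans: "\<And>w. w < 2 ^ m \<Longrightarrow> transitions_within nS nA (P w)"
    and traj_close: "\<And>w j pol. w < 2 ^ m \<Longrightarrow> j < m \<Longrightarrow>
      \<alpha> \<le> hellinger_affinity (trajs nS nA H)
        (run_episode (P w) nA pol H [] s1) (run_episode (P (flip_bit j w)) nA pol H [] s1)"
    and feedback_close: "\<And>w j tr. w < 2 ^ m \<Longrightarrow> j < m \<Longrightarrow> tr \<in> trajs nS nA H \<Longrightarrow>
      \<beta> \<le> hellinger_affinity UNIV (bernoulli_pmf (g w tr)) (bernoulli_pmf (g (flip_bit j w) tr))"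
    and "0 \<le> \<alpha>" "0 \<le> \<beta>" "0 \<le> \<gamma>"
    and gap: "\<And>w pol. w < 2 ^ m \<Longrightarrow> \<gamma> * (\<Sum>j<m. bit_error nA s1 w j pol)
      \<le> opt_value (P w) nA H s1 (g w) - value_of (P w) nA H s1 (g w) pol"
  shows "\<exists>w<2 ^ m. \<gamma> * K * m * (\<alpha> * \<beta>) ^ (2 * K) / 4
    \<le> expected_regret (P w) nA H s1 (g w) A K"
proof -
  define p where "p w = interact (P w) nA H s1 (g w) A K" for w
  define E where "E w k j = measure_pmf.expectation (p w) (\<lambda>h. bit_error nA s1 w j (A (take k h)))"
    for w k j
  have "0 < nA"
    using nA by simp
  have per_bit: "2 ^ m * (\<alpha> * \<beta>) ^ (2 * K) / 4 \<le> (\<Sum>w<2 ^ m. E w k j)" if "j < m" for k j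
  proof -
    have "2 ^ m * ((\<alpha> * \<beta>) ^ K)\<^sup>2 / 4 \<le> (\<Sum>w<2 ^ m. E w k j)"
      unfolding E_def
    proof (rule hypercube_expectation_sum_ge[OF finite_histories _ \<open>j < m\<close>])
      fix w :: nat assume w: "w < 2 ^ m"
      show "set_pmf (p w) \<subseteq> histories nS nA H K"
        unfolding p_def using trans[OF w] \<open>0 < nA\<close> \<open>s1 < nS\<close> by (rule set_pmf_interact)
      show "(\<alpha> * \<beta>) ^ K \<le> hellinger_affinity (histories nS nA H K) (p w) (p (flip_bit j w))"
        unfolding p_def
        using trans[OF w] trans[OF flip_bit_less_two_power[OF w \<open>j < m\<close>]] \<open>0 < nA\<close> \<open>s1 < nS\<close>
          traj_close[OF w \<open>j < m\<close>] feedback_close[OF w \<open>j < m\<close>] \<open>0 \<le> \<alpha>\<close> \<open>0 \<le> \<beta>\<close>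
        by (rule interact_affinity_ge)
    qed (auto simp: bit_error_flip_bit bit_error_bounds \<open>0 \<le> \<alpha>\<close> \<open>0 \<le> \<beta>\<close>)
    then show ?thesis
      by (simp add: power_mult[symmetric] mult.commute)
  qed
  have "real (card {..<(2::nat) ^ m}) * (\<gamma> * K * m * (\<alpha> * \<beta>) ^ (2 * K) / 4)
      = \<gamma> * (\<Sum>k<K. \<Sum>j<m. 2 ^ m * (\<alpha> * \<beta>) ^ (2 * K) / 4)"
    by simp
  also have "\<dots> \<le> \<gamma> * (\<Sum>k<K. \<Sum>j<m. \<Sum>w<2 ^ m. E w k j)"
    using per_bit \<open>0 \<le> \<gamma>\<close> by (intro mult_left_mono sum_mono) auto
  also have "\<dots> = (\<Sum>w<2 ^ m. \<gamma> * (\<Sum>k<K. \<Sum>j<m. E w k j))"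
    by (simp add: sum_distrib_left sum.swap[where A = "{..<m}" and B = "{..<2 ^ m}"]
        sum.swap[where A = "{..<K}" and B = "{..<2 ^ m}"])
  also have "\<dots> \<le> (\<Sum>w<2 ^ m. expected_regret (P w) nA H s1 (g w) A K)"
    unfolding E_def p_def
    using trans \<open>0 < nA\<close> \<open>s1 < nS\<close> gap by (intro sum_mono expected_regret_ge_bit_errors) auto
  finally have "real (card {..<(2::nat) ^ m}) * (\<gamma> * K * m * (\<alpha> * \<beta>) ^ (2 * K) / 4)
      \<le> (\<Sum>w<2 ^ m. expected_regret (P w) nA H s1 (g w) A K)" .
  from ex_ge_average[OF _ _ this] show ?thesis
    by (auto simp: lessThan_empty_iff)
qed

lemma value_of_le_opt_value:
  assumes "\<And>tr. 0 \<le> g tr \<and> g tr \<le> 1"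
  shows "value_of P nA H s1 g pol \<le> opt_value P nA H s1 g"
  unfolding opt_value_def
proof (rule cSUP_upper)
  have "value_of P nA H s1 g pol' \<le> 1" for pol'
    unfolding value_of_def using assms
    by (intro measure_pmf.integral_le_const measure_pmf.integrable_const_bound[where B = 1]) auto
  then show "bdd_above (range (value_of P nA H s1 g))"
    by (intro bdd_aboveI2)
qed simp

lemma suboptimality_ge_bit_errors:
  fixes u :: "nat \<Rightarrow> real"
  assumes "w < nA"
    and value_eq: "\<And>pol. value_of P nA H s1 g pol
      = measure_pmf.expectation (first_action nA pol s1) u"
    and opt: "\<And>pol. value_of P nA H s1 g pol \<le> opt_value P nA H s1 g"
    and gap: "\<And>a. a < nA \<Longrightarrow> \<gamma> * (\<Sum>j<m. of_bool (bit a j \<noteq> bit w j)) \<le> u w - u a"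
  shows "\<gamma> * (\<Sum>j<m. bit_error nA s1 w j pol)
    \<le> opt_value P nA H s1 g - value_of P nA H s1 g pol"
proof -
  let ?q = "first_action nA pol s1"
  have supp: "set_pmf ?q \<subseteq> {..<nA}"
    using \<open>w < nA\<close> by (auto simp: first_action_def)
  have int: "integrable (measure_pmf ?q) f" for f :: "nat \<Rightarrow> real"
    using finite_subset[OF supp] by (simp add: integrable_measure_pmf_finite)
  have "bit_error nA s1 w j pol = measure_pmf.expectation ?q (\<lambda>a. of_bool (bit a j \<noteq> bit w j))"
    for j
  proof -
    have "bit_error nA s1 w j pol = measure_pmf.expectation ?q (indicator {a. bit a j \<noteq> bit w j})"
      unfolding bit_error_def by simp
    also have "indicator {a. bit a j \<noteq> bit w j} = (\<lambda>a. of_bool (bit a j \<noteq> bit w j) :: real)"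
      by (auto simp: indicator_def)
    finally show ?thesis .
  qed
  then have "\<gamma> * (\<Sum>j<m. bit_error nA s1 w j pol)
      = measure_pmf.expectation ?q (\<lambda>a. \<gamma> * (\<Sum>j<m. of_bool (bit a j \<noteq> bit w j)))"
    by (simp only: integral_mult_right_zero Bochner_Integration.integral_sum[OF int])
  also have "\<dots> \<le> measure_pmf.expectation ?q (\<lambda>a. u w - u a)"
    using supp gap by (intro integral_mono_AE int) (auto simp: AE_measure_pmf_iff)
  also have "\<dots> = value_of P nA H s1 g (\<lambda>_ _. return_pmf w) - value_of P nA H s1 g pol"
    using \<open>w < nA\<close> by (simp add: value_eq int first_action_def[of _ "\<lambda>_ _. return_pmf w"])
  also have "\<dots> \<le> opt_value P nA H s1 g - value_of P nA H s1 g pol"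
    using opt by simp
  finally show ?thesis .
qed

section \<open>Hard instances\<close>

definition bit_sign :: "bool \<Rightarrow> real" where
  "bit_sign b = (if b then 1 else -1)"

definition sign_corr :: "nat \<Rightarrow> nat \<Rightarrow> nat \<Rightarrow> real" where
  "sign_corr m w a = (\<Sum>i<m. bit_sign (bit a i) * bit_sign (bit w i))"

lemma bit_sign_square [simp]: "(bit_sign b)\<^sup>2 = 1"
  by (simp add: bit_sign_def)

lemma abs_bit_sign [simp]: "\<bar>bit_sign b\<bar> = 1"
  by (simp add: bit_sign_def)

lemma abs_sign_corr_le: "\<bar>sign_corr m w a\<bar> \<le> m"
proof -
  have "\<bar>sign_corr m w a\<bar> \<le> (\<Sum>i<m. \<bar>bit_sign (bit a i) * bit_sign (bit w i)\<bar>)"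
    unfolding sign_corr_def by (rule sum_abs)
  also have "\<dots> = m"
    by (simp add: abs_mult)
  finally show ?thesis .
qed

lemma sign_corr_self_diff:
  "sign_corr m w w - sign_corr m w a = 2 * (\<Sum>j<m. of_bool (bit a j \<noteq> bit w j))"
  unfolding sign_corr_def sum_subtractf[symmetric] sum_distrib_left
  by (intro sum.cong) (auto simp: bit_sign_def)

lemma sign_corr_flip_bit: "\<bar>sign_corr m w a - sign_corr m (flip_bit j w) a\<bar> \<le> 2"
proof -
  have "\<bar>sign_corr m w a - sign_corr m (flip_bit j w) a\<bar>
      \<le> (\<Sum>i<m. \<bar>bit_sign (bit a i) * bit_sign (bit w i)
                  - bit_sign (bit a i) * bit_sign (bit (flip_bit j w) i)\<bar>)"
    unfolding sign_corr_def sum_subtractf[symmetric] by (rule sum_abs)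
  also have "\<dots> \<le> (\<Sum>i<m. if i = j then 2 else 0)"
    by (intro sum_mono) (auto simp: bit_flip_bit_iff bit_sign_def)
  also have "\<dots> \<le> 2"
    by simp
  finally show ?thesis .
qed

definition hard_mean :: "real \<Rightarrow> nat \<Rightarrow> nat \<Rightarrow> nat \<Rightarrow> real" where
  "hard_mean c m w a = 1/2 + c * sign_corr m w a"

lemma hard_mean_bounds:
  assumes "0 \<le> c" "c * m \<le> 1/4"
  shows "1/4 \<le> hard_mean c m w a \<and> hard_mean c m w a \<le> 3/4"
proof -
  have "\<bar>c * sign_corr m w a\<bar> \<le> c * m"
    using abs_sign_corr_le[of m w a] assms(1) by (simp add: abs_mult mult_left_mono)
  then show ?thesis
    unfolding hard_mean_def using assms(2) by (simp add: abs_le_iff)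
qed

lemma hard_mean_gap:
  "2 * c * (\<Sum>j<m. of_bool (bit a j \<noteq> bit w j)) = hard_mean c m w w - hard_mean c m w a"
  using sign_corr_self_diff[of m w a] by (simp add: hard_mean_def right_diff_distrib[symmetric])

lemma hard_mean_affinity_ge:
  assumes "0 \<le> c" "c * m \<le> 1/4"
  shows "1 - (2 * c)\<^sup>2 \<le> hellinger_affinity UNIV
    (bernoulli_pmf (hard_mean c m w a)) (bernoulli_pmf (hard_mean c m (flip_bit j w) a))"
proof (rule hellinger_affinity_bernoulli_ge)
  have "\<bar>hard_mean c m w a - hard_mean c m (flip_bit j w) a\<bar>
      = c * \<bar>sign_corr m w a - sign_corr m (flip_bit j w) a\<bar>"
    using assms(1) by (simp add: hard_mean_def abs_mult right_diff_distrib[symmetric])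
  also have "\<dots> \<le> 2 * c"
    using sign_corr_flip_bit[of m w a j] assms(1) by (simp add: mult_left_mono mult.commute)
  finally show "\<bar>hard_mean c m w a - hard_mean c m (flip_bit j w) a\<bar> \<le> 2 * c" .
qed (use hard_mean_bounds[OF assms] in auto)

definition sign_vector :: "real \<Rightarrow> nat \<Rightarrow> nat \<Rightarrow> real" where
  "sign_vector c w i = (if i = 0 then 1 else c * bit_sign (bit w (i - 1)))"

lemma vnorm_sign_vector_le:
  assumes "real m * c\<^sup>2 \<le> 3"
  shows "vnorm (Suc m) (sign_vector c w) \<le> 2"
proof -
  have "(\<Sum>i<Suc m. (sign_vector c w i)\<^sup>2) = 1 + real m * c\<^sup>2"
    unfolding sum.lessThan_Suc_shift by (simp add: sign_vector_def power_mult_distrib)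
  also have "\<dots> \<le> 2\<^sup>2"
    using assms by simp
  finally show ?thesis
    unfolding vnorm_def using real_sqrt_le_mono by fastforce
qed

definition unit_vector :: "nat \<Rightarrow> real" where
  "unit_vector i = (if i = 0 then 1 else 0)"

lemma sum_mult_unit_vector: "0 < d \<Longrightarrow> (\<Sum>i<d. f i * unit_vector i) = f 0"
  by (simp add: unit_vector_def if_distrib sum.delta cong: if_cong)

lemma vnorm_scaled_unit_vector:
  assumes "0 < d"
  shows "vnorm d (\<lambda>i. c * unit_vector i) = \<bar>c\<bar>"
proof -
  have "(c * unit_vector i)\<^sup>2 = c\<^sup>2 * unit_vector i" for i
    by (simp add: unit_vector_def)
  then show ?thesis
    unfolding vnorm_def using sum_mult_unit_vector[OF assms] by simp
qed

lemma sqrt_rate_le_hypercube_bound: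
  fixes m K :: nat
  assumes "0 < K"
  shows "m * sqrt K / 16 \<le> 1 / (2 * sqrt K) * K * m * (1 - 1 / (4 * K)) ^ (2 * K) / 4"
proof -
  have "1 + real (2 * K) * (- 1 / (4 * K)) \<le> (1 + - 1 / (4 * K)) ^ (2 * K)"
    using assms by (intro Bernoulli_inequality) (simp add: field_simps)
  then have half: "1/2 \<le> (1 - 1 / (4 * K)) ^ (2 * K)"
    using assms by simp
  have "m * sqrt K / 16 = m * sqrt K / 8 * (1/2)"
    by simp
  also have "\<dots> \<le> m * sqrt K / 8 * (1 - 1 / (4 * K)) ^ (2 * K)"
    using half by (intro mult_left_mono) auto
  also have "\<dots> = 1 / (2 * sqrt K) * K * m * (1 - 1 / (4 * K)) ^ (2 * K) / 4"
    using assms by (simp add: field_simps flip: real_sqrt_mult)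
  finally show ?thesis .
qed

definition admits_hard_instance :: "algorithm \<Rightarrow> real \<Rightarrow> nat \<Rightarrow> nat \<Rightarrow> nat \<Rightarrow> real \<Rightarrow> bool" where
  "admits_hard_instance Alg B dP dG K r \<longleftrightarrow>
     (\<exists>nS nA H s1 psi theta P phi w.
       0 < nS \<and> 0 < nA \<and> 0 < H \<and> s1 < nS \<and>
       linear_mixture dP nS nA psi theta P B \<and>
       linear_feedback dG nS nA H phi w B \<and>
       r \<le> expected_regret P nA H s1 (lin_feedback dG phi w)
         (Alg (dP, dG, nS, nA, H, s1, psi, phi)) K)"

lemma admits_hard_instance_mono:
  "admits_hard_instance Alg B dP dG K r \<Longrightarrow> r' \<le> r \<Longrightarrow> admits_hard_instance Alg B dP dG K r'"
  unfolding admits_hard_instance_def by (meson order_trans)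

lemma inverse_sqrt_scale_bounds:
  fixes m K :: nat
  assumes "0 < K" "real m * real m \<le> K"
  shows "0 \<le> 1 / (4 * sqrt K)" "1 / (4 * sqrt K) * m \<le> 1/4" "1 / (4 * sqrt K) \<le> 1/4"
    and "(2 * (1 / (4 * sqrt K)))\<^sup>2 = 1 / (4 * K)"
proof -
  have "real m \<le> sqrt K"
    using assms(2) by (simp add: real_le_rsqrt power2_eq_square)
  then show "0 \<le> 1 / (4 * sqrt K)" "1 / (4 * sqrt K) * m \<le> 1/4" "1 / (4 * sqrt K) \<le> 1/4"
      "(2 * (1 / (4 * sqrt K)))\<^sup>2 = 1 / (4 * K)"
    using assms(1) by (auto simp: field_simps power2_eq_square)
qed

lemma hard_mean_regret_lower_bound:
  fixes P :: "nat \<Rightarrow> nat \<Rightarrow> nat \<Rightarrow> nat pmf" and g :: "nat \<Rightarrow> traj \<Rightarrow> real"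
  assumes K: "0 < K" "real m * real m \<le> K" and nA: "nA = 2 ^ m" and "s1 < nS"
    and trans: "\<And>w. w < 2 ^ m \<Longrightarrow> transitions_within nS nA (P w)"
    and bounded: "\<And>w tr. 0 \<le> g w tr \<and> g w tr \<le> 1"
    and value_eq: "\<And>w pol. w < 2 ^ m \<Longrightarrow> value_of (P w) nA H s1 (g w) pol
      = measure_pmf.expectation (first_action nA pol s1) (hard_mean (1 / (4 * sqrt K)) m w)"
    and traj_close: "\<And>w j pol. w < 2 ^ m \<Longrightarrow> j < m \<Longrightarrow>
      \<alpha> \<le> hellinger_affinity (trajs nS nA H)
        (run_episode (P w) nA pol H [] s1) (run_episode (P (flip_bit j w)) nA pol H [] s1)"
    and feedback_close: "\<And>w j tr. w < 2 ^ m \<Longrightarrow> j < m \<Longrightarrow> tr \<in> trajs nS nA H \<Longrightarrow>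
      \<beta> \<le> hellinger_affinity UNIV (bernoulli_pmf (g w tr)) (bernoulli_pmf (g (flip_bit j w) tr))"
    and "0 \<le> \<alpha>" "0 \<le> \<beta>" and close: "1 - 1 / (4 * K) \<le> \<alpha> * \<beta>"
  shows "\<exists>w<2 ^ m. m * sqrt K / 16 \<le> expected_regret (P w) nA H s1 (g w) A K"
proof -
  define c where "c = 1 / (4 * sqrt K)"
  note c = inverse_sqrt_scale_bounds[OF K, folded c_def]
  have "\<exists>w<2 ^ m. (2 * c) * K * m * (\<alpha> * \<beta>) ^ (2 * K) / 4
      \<le> expected_regret (P w) nA H s1 (g w) A K"
  proof (rule hypercube_regret_lower_bound[OF nA \<open>s1 < nS\<close> trans traj_close feedback_close])
    fix w :: nat and pol :: policy assume "w < 2 ^ m"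
    show "2 * c * (\<Sum>j<m. bit_error nA s1 w j pol)
      \<le> opt_value (P w) nA H s1 (g w) - value_of (P w) nA H s1 (g w) pol"
    proof (rule suboptimality_ge_bit_errors[OF _ value_eq[OF \<open>w < 2 ^ m\<close>, folded c_def]])
      show "w < nA"
        using \<open>w < 2 ^ m\<close> nA by simp
      show "value_of (P w) nA H s1 (g w) pol' \<le> opt_value (P w) nA H s1 (g w)" for pol'
        using bounded by (rule value_of_le_opt_value)
    qed (rule eq_refl[OF hard_mean_gap])
  qed (use c \<open>0 \<le> \<alpha>\<close> \<open>0 \<le> \<beta>\<close> in auto)
  then obtain w where "w < 2 ^ m"
    and regret: "(2 * c) * K * m * (\<alpha> * \<beta>) ^ (2 * K) / 4 \<le> expected_regret (P w) nA H s1 (g w) A K"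
    by blast
  have "m * sqrt K / 16 \<le> (2 * c) * K * m * (1 - 1 / (4 * K)) ^ (2 * K) / 4"
    using sqrt_rate_le_hypercube_bound[OF K(1), of m] by (simp add: c_def)
  also have "\<dots> \<le> (2 * c) * K * m * (\<alpha> * \<beta>) ^ (2 * K) / 4"
    using close c(1) K(1) by (intro divide_right_mono mult_left_mono power_mono) auto
  finally show ?thesis
    using \<open>w < 2 ^ m\<close> regret by auto
qed

section \<open>Hiding the parameter in the feedback\<close>

definition first_action_features :: "traj \<Rightarrow> nat \<Rightarrow> real" where
  "first_action_features tr i = (if i = 0 then 1/2 else bit_sign (bit (snd (hd tr)) (i - 1)))"

lemma lin_feedback_first_action_features:
  "lin_feedback (Suc m) first_action_features (sign_vector c w) tr = hard_mean c m w (snd (hd tr))"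
  unfolding lin_feedback_def hard_mean_def sign_corr_def sum.lessThan_Suc_shift
  by (simp add: first_action_features_def sign_vector_def sum_distrib_left ac_simps)

lemma linear_mixture_single_state:
  assumes "0 < dP" "1 \<le> B"
  shows "linear_mixture dP 1 nA (\<lambda>_ _ _. unit_vector) unit_vector (\<lambda>_ _. return_pmf 0) B"
proof -
  have "vnorm dP (\<lambda>i. \<Sum>s'<1. unit_vector i * V s') = \<bar>V 0\<bar>" for V :: "nat \<Rightarrow> real"
    using vnorm_scaled_unit_vector[OF assms(1), of "V 0"] by (simp add: mult.commute)
  moreover have "vnorm dP unit_vector = 1"
    using vnorm_scaled_unit_vector[OF assms(1), of 1] by simp
  moreover have "(\<Sum>i<dP. unit_vector i * unit_vector i) = 1"
    using sum_mult_unit_vector[OF assms(1)] by (simp add: unit_vector_def)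
  ultimately show ?thesis
    using assms by (auto simp: linear_mixture_def)
qed

lemma run_episode_one_step:
  "run_episode P nA pol 1 [] s = map_pmf (\<lambda>a. [(s, a)]) (first_action nA pol s)"
  by (simp add: first_action_def map_pmf_def bind_assoc_pmf bind_return_pmf Let_def)

lemma feedback_hard_instance:
  fixes Alg :: algorithm and K m :: nat
  assumes K: "0 < K" "real m * real m \<le> K" and "2 \<le> B" "0 < dP"
  shows "admits_hard_instance Alg B dP (Suc m) K (m * sqrt K / 16)"
proof -
  define c where "c = 1 / (4 * sqrt K)"
  define nA where "nA = (2::nat) ^ m"
  define P :: "nat \<Rightarrow> nat \<Rightarrow> nat pmf" where "P = (\<lambda>_ _. return_pmf 0)"
  define g where "g w = lin_feedback (Suc m) first_action_features (sign_vector c w)" for w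
  note c = inverse_sqrt_scale_bounds[OF K, folded c_def]
  have g_mean: "g w tr = hard_mean c m w (snd (hd tr))" for w tr
    by (simp add: g_def lin_feedback_first_action_features)
  have g_bounds: "0 \<le> g w tr \<and> g w tr \<le> 1" for w tr
    using hard_mean_bounds[OF c(1,2), of w "snd (hd tr)"] by (simp add: g_mean)
  have trans: "transitions_within 1 nA P"
    by (simp add: transitions_within_def P_def)
  have "\<exists>w<2 ^ m. m * sqrt K / 16 \<le> expected_regret P nA 1 0 (g w)
      (Alg (dP, Suc m, 1, nA, 1, 0, \<lambda>_ _ _. unit_vector, first_action_features)) K"
  proof (rule hard_mean_regret_lower_bound[OF K nA_def,
        where nS = 1 and \<alpha> = 1 and \<beta> = "1 - 1 / (4 * K)"])
    fix w j :: nat and pol :: policy and tr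
    show "value_of P nA 1 0 (g w) pol
      = measure_pmf.expectation (first_action nA pol 0) (hard_mean (1 / (4 * sqrt K)) m w)"
      unfolding value_of_def run_episode_one_step by (simp add: g_mean c_def)
    have "hellinger_affinity (trajs 1 nA 1)
        (run_episode P nA pol 1 [] 0) (run_episode P nA pol 1 [] 0) = 1"
      using trans
      by (intro hellinger_affinity_self finite_trajs set_pmf_run_episode) (simp_all add: nA_def)
    then show "1 \<le> hellinger_affinity (trajs 1 nA 1)
        (run_episode P nA pol 1 [] 0) (run_episode P nA pol 1 [] 0)"
      by simp
    show "1 - 1 / (4 * K)
      \<le> hellinger_affinity UNIV (bernoulli_pmf (g w tr)) (bernoulli_pmf (g (flip_bit j w) tr))"
      using hard_mean_affinity_ge[OF c(1,2)] c(4) by (simp add: g_mean)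
  qed (use trans g_bounds K(1) in \<open>auto simp: c_def\<close>)
  then obtain w where regret: "m * sqrt K / 16 \<le> expected_regret P nA 1 0 (g w)
      (Alg (dP, Suc m, 1, nA, 1, 0, \<lambda>_ _ _. unit_vector, first_action_features)) K"
    by blast
  have "real m * c\<^sup>2 = (c * m) * c"
    by (simp add: power2_eq_square)
  also have "\<dots> \<le> 1/4 * (1/4)"
    using c by (intro mult_mono) auto
  finally have "linear_feedback (Suc m) 1 nA 1 first_action_features (sign_vector c w) B"
    using g_bounds vnorm_sign_vector_le[of m c w] \<open>2 \<le> B\<close> by (auto simp: linear_feedback_def g_def)
  moreover have "linear_mixture dP 1 nA (\<lambda>_ _ _. unit_vector) unit_vector P B"
    unfolding P_def using assms by (intro linear_mixture_single_state) auto
  ultimately show ?thesis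
    unfolding admits_hard_instance_def using regret[unfolded g_def]
    by (intro exI[of _ 1] exI[of _ nA] exI[of _ 1] exI[of _ 0] exI[of _ "\<lambda>_ _ _. unit_vector"]
        exI[of _ unit_vector] exI[of _ P]
          exI[of _ first_action_features] exI[of _ "sign_vector c w"])
      (simp add: nA_def)
qed

section \<open>Hiding the parameter in the transitions\<close>

definition second_step :: "nat \<Rightarrow> policy \<Rightarrow> nat \<Rightarrow> nat \<Rightarrow> nat \<Rightarrow> traj pmf" where
  "second_step nA pol s a s'
    = map_pmf (\<lambda>a'. [(s, a), (s', if a' < nA then a' else 0)]) (pol [(s, a)] s')"

lemma run_episode_two_steps:
  "run_episode P nA pol 2 [] s =
     bind_pmf (first_action nA pol s) (\<lambda>a. bind_pmf (P s a) (second_step nA pol s a))"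
proof -
  have "run_episode P nA pol 1 tr
    = (\<lambda>s. map_pmf (\<lambda>a. tr @ [(s, if a < nA then a else 0)]) (pol tr s))"
    for tr
    by (rule ext) (simp add: map_pmf_def)
  then show ?thesis
    by (simp add: numeral_2_eq_2 first_action_def second_step_def[abs_def] map_pmf_def
        bind_assoc_pmf bind_return_pmf Let_def)
qed

lemma set_pmf_second_step:
  "0 < nA \<Longrightarrow> set_pmf (second_step nA pol s a s') \<subseteq> (\<lambda>b. [(s, a), (s', b)]) ` {..<nA}"
  by (auto simp: second_step_def)

definition hard_transition :: "real \<Rightarrow> nat \<Rightarrow> nat \<Rightarrow> nat \<Rightarrow> nat \<Rightarrow> nat pmf" where
  "hard_transition c m w s a = map_pmf of_bool (bernoulli_pmf (hard_mean c m w a))"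

definition transition_features :: "real \<Rightarrow> nat \<Rightarrow> nat \<Rightarrow> nat \<Rightarrow> nat \<Rightarrow> real" where
  "transition_features \<kappa> s a s' i =
     (if i = 0 then (if s' < 2 then 1/2 else 0)
      else \<kappa> * bit_sign (bit a (i - 1)) * (if s' = 1 then 1 else if s' = 0 then -1 else 0))"

definition second_state_features :: "traj \<Rightarrow> nat \<Rightarrow> real" where
  "second_state_features tr i = of_bool (fst (tr ! 1) = 1) * unit_vector i"

lemma set_pmf_hard_transition: "set_pmf (hard_transition c m w s a) \<subseteq> {..<2}"
  by (auto simp: hard_transition_def)

lemma pmf_hard_transition:
  assumes "0 \<le> hard_mean c m w a" "hard_mean c m w a \<le> 1"
  shows "pmf (hard_transition c m w s a) 1 = hard_mean c m w a"
    and "pmf (hard_transition c m w s a) 0 = 1 - hard_mean c m w a"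
  using pmf_map_inj'[of "of_bool :: bool \<Rightarrow> nat" _ True]
    pmf_map_inj'[of "of_bool :: bool \<Rightarrow> nat" _ False] assms
  by (simp_all add: hard_transition_def inj_def)

lemma transition_features_mean:
  assumes "s' < 2"
  shows "(\<Sum>i<Suc m. transition_features \<kappa> s a s' i * sign_vector \<epsilon> w i)
    = (if s' = 1 then hard_mean (\<kappa> * \<epsilon>) m w a else 1 - hard_mean (\<kappa> * \<epsilon>) m w a)"
  using assms
  unfolding sum.lessThan_Suc_shift hard_mean_def sign_corr_def sum_distrib_left
  by (auto simp: transition_features_def sign_vector_def ac_simps
    sum_negf[symmetric] intro!: sum.cong)

lemma value_of_hard_transition:
  assumes "0 < nA" "0 \<le> c" "c * m \<le> 1/4" and g: "\<And>tr. g tr = of_bool (fst (tr ! 1) = 1)"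
  shows "value_of (hard_transition c m w) nA 2 s1 g pol
    = measure_pmf.expectation (first_action nA pol s1) (hard_mean c m w)"
proof -
  have finite_second_step: "finite (set_pmf (second_step nA pol s1 a s'))" for a s'
    using finite_subset[OF set_pmf_second_step[OF \<open>0 < nA\<close>]] by blast
  have "measure_pmf.expectation
      (bind_pmf (hard_transition c m w s1 a) (second_step nA pol s1 a)) g = hard_mean c m w a" for a
  proof -
    have "measure_pmf.expectation
        (bind_pmf (hard_transition c m w s1 a) (second_step nA pol s1 a)) g
        = measure_pmf.expectation (hard_transition c m w s1 a) (\<lambda>s'. of_bool (s' = 1))"
      using set_pmf_hard_transition finite_second_step
      by (subst expectation_bind_pmf_finite[of "{..<2}"]) (simp_all add: second_step_def g)
    also have "\<dots> = hard_mean c m w a"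
      using hard_mean_bounds[OF assms(2,3), of w a] by (simp add: hard_transition_def)
    finally show ?thesis .
  qed
  moreover have "finite (set_pmf (bind_pmf (hard_transition c m w s1 a)
    (second_step nA pol s1 a)))" for a
    using finite_subset[OF set_pmf_hard_transition[of c m w s1 a]] finite_second_step by simp
  ultimately show ?thesis
    unfolding value_of_def run_episode_two_steps using \<open>0 < nA\<close>
    by (subst expectation_bind_pmf_finite[of "{..<nA}"]) (auto simp: first_action_def)
qed

lemma run_episode_hard_transition_affinity_ge:
  assumes "0 < nA" "0 \<le> c" "c * m \<le> 1/4" "s1 < 2"
  shows "1 - (2 * c)\<^sup>2 \<le> hellinger_affinity (trajs 2 nA 2)
    (run_episode (hard_transition c m w) nA pol 2 [] s1)
    (run_episode (hard_transition c m (flip_bit j w)) nA pol 2 [] s1)"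
  unfolding run_episode_two_steps
proof (rule hellinger_affinity_bind_kernels_ge[of "{..<nA}"])
  show "set_pmf (first_action nA pol s1) \<subseteq> {..<nA}"
    using \<open>0 < nA\<close> by (auto simp: first_action_def)
  fix a assume "a \<in> {..<nA}"
  have "1 - (2 * c)\<^sup>2 \<le> hellinger_affinity UNIV (bernoulli_pmf (hard_mean c m w a))
      (bernoulli_pmf (hard_mean c m (flip_bit j w) a))"
    using hard_mean_affinity_ge[OF assms(2,3)] by simp
  also have "\<dots> \<le> hellinger_affinity (trajs 2 nA 2)
      (bind_pmf (hard_transition c m w s1 a) (second_step nA pol s1 a))
      (bind_pmf (hard_transition c m (flip_bit j w) s1 a) (second_step nA pol s1 a))"
    unfolding hard_transition_def bind_map_pmf
    using set_pmf_second_step[OF \<open>0 < nA\<close>] \<open>a \<in> {..<nA}\<close> \<open>s1 < 2\<close>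
    by (intro hellinger_affinity_le_bind_kernel finite_trajs) (fastforce simp: trajs_eq)+
  finally show "1 - (2 * c)\<^sup>2 \<le> hellinger_affinity (trajs 2 nA 2)
      (bind_pmf (hard_transition c m w s1 a) (second_step nA pol s1 a))
      (bind_pmf (hard_transition c m (flip_bit j w) s1 a) (second_step nA pol s1 a))" .
qed simp

lemma vnorm_transition_features_le:
  assumes V: "\<forall>s'<2. 0 \<le> V s' \<and> V s' \<le> 1" and "0 < m"
  shows "vnorm (Suc m) (\<lambda>i. \<Sum>s'<2. transition_features (1 / (2 * sqrt m)) s a s' i * V s') \<le> 1"
proof -
  let ?\<kappa> = "1 / (2 * sqrt m)"
  have coord0: "(\<Sum>s'<2. transition_features ?\<kappa> s a s' 0 * V s') = (V 0 + V 1) / 2"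
    by (simp add: transition_features_def numeral_2_eq_2 field_simps)
  have coord_Suc: "(\<Sum>s'<2. transition_features ?\<kappa> s a s' (Suc i) * V s')\<^sup>2 = ?\<kappa>\<^sup>2 * (V 1 - V 0)\<^sup>2"
    for i
  proof -
    have "(\<Sum>s'<2. transition_features ?\<kappa> s a s' (Suc i) * V s') = ?\<kappa> * bit_sign (bit a i) *
      (V 1 - V 0)"
      by (simp add: transition_features_def numeral_2_eq_2 algebra_simps diff_divide_distrib)
    then show ?thesis
      by (simp add: power_mult_distrib power_divide)
  qed
  have "(\<Sum>i<Suc m. (\<Sum>s'<2. transition_features ?\<kappa> s a s' i * V s')\<^sup>2)
      = ((V 0 + V 1) / 2)\<^sup>2 + real m * ?\<kappa>\<^sup>2 * (V 1 - V 0)\<^sup>2"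
    unfolding sum.lessThan_Suc_shift coord0 coord_Suc by simp
  also have "?\<kappa>\<^sup>2 = 1 / (4 * m)"
    by (simp add: power_divide power_mult_distrib)
  also have "((V 0 + V 1) / 2)\<^sup>2 + real m * (1 / (4 * m)) * (V 1 - V 0)\<^sup>2 = ((V 0)\<^sup>2 + (V 1)\<^sup>2) / 2"
    using \<open>0 < m\<close> by (simp add: power2_eq_square field_simps)
  also have "\<dots> \<le> 1"
    using V power_le_one[of "V 0" 2] power_le_one[of "V 1" 2] by simp
  finally show ?thesis
    unfolding vnorm_def by simp
qed

text \<open>The product c of the two scales is split so that both norm constraints hold:
  the features carry 1/(2 sqrt m), the parameter 2 sqrt m c.\<close>
lemma linear_mixture_hard_transition:
  assumes "0 < m" "0 \<le> c" "c * m \<le> 1/4" "2 \<le> B"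
  shows "linear_mixture (Suc m) 2 nA (transition_features (1 / (2 * sqrt m)))
    (sign_vector (2 * sqrt m * c) w) (hard_transition c m w) B"
proof -
  have c: "1 / (2 * sqrt m) * (2 * sqrt m * c) = c"
    using \<open>0 < m\<close> by simp
  have "pmf (hard_transition c m w s a) s'
      = (\<Sum>i<Suc m. transition_features (1 / (2 * sqrt m)) s a s' i
        * sign_vector (2 * sqrt m * c) w i)"
    if s': "s' < 2" for s a s'
  proof -
    have "(\<Sum>i<Suc m. transition_features (1 / (2 * sqrt m)) s a s' i
      * sign_vector (2 * sqrt m * c) w i)
        = (if s' = 1 then hard_mean c m w a else 1 - hard_mean c m w a)"
      unfolding transition_features_mean[OF s'] c ..
    moreover have "s' = 0 \<or> s' = 1"
      using s' by linarith
    ultimately show ?thesis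
      using hard_mean_bounds[OF assms(2,3), of w a] pmf_hard_transition[of c m w a s] by auto
  qed
  moreover have "real m * (2 * sqrt m * c)\<^sup>2 \<le> 3"
  proof -
    have "real m * (2 * sqrt m * c)\<^sup>2 = 4 * (c * m)\<^sup>2"
      by (simp add: power_mult_distrib power2_eq_square)
    also have "\<dots> \<le> 4 * (1/4)\<^sup>2"
      using assms(2,3) by (intro mult_left_mono power_mono) auto
    also have "\<dots> \<le> 3"
      by (simp add: power2_eq_square)
    finally show ?thesis .
  qed
  then have "vnorm (Suc m) (sign_vector (2 * sqrt m * c) w) \<le> B"
    using vnorm_sign_vector_le[of m _ w] assms(4) by fastforce
  ultimately show ?thesis
    unfolding linear_mixture_def
    using set_pmf_hard_transition vnorm_transition_features_le[OF _ \<open>0 < m\<close>] by simp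
qed

lemma lin_feedback_second_state_features:
  "0 < dG \<Longrightarrow> lin_feedback dG second_state_features unit_vector tr = of_bool (fst (tr ! 1) = 1)"
  using sum_mult_unit_vector[of dG]
  by (simp add: lin_feedback_def second_state_features_def unit_vector_def)

lemma linear_feedback_second_state:
  assumes "0 < dG" "1 \<le> B"
  shows "linear_feedback dG nS nA H second_state_features unit_vector B"
proof -
  have "vnorm dG unit_vector = 1"
    using vnorm_scaled_unit_vector[OF assms(1), of 1] by simp
  then show ?thesis
    using assms(2) lin_feedback_second_state_features[OF assms(1)]
    by (simp add: linear_feedback_def)
qed

lemma transition_hard_instance:
  fixes Alg :: algorithm and K m :: nat
  assumes K: "0 < K" "real m * real m \<le> K" and "0 < m" "2 \<le> B" "0 < dG"
  shows "admits_hard_instance Alg B (Suc m) dG K (m * sqrt K / 16)"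
proof -
  define c where "c = 1 / (4 * sqrt K)"
  define nA where "nA = (2::nat) ^ m"
  define psi where "psi = transition_features (1 / (2 * sqrt m))"
  define g where "g = lin_feedback dG second_state_features unit_vector"
  note c = inverse_sqrt_scale_bounds[OF K, folded c_def]
  have "0 < nA"
    by (simp add: nA_def)
  have g_eq: "g tr = of_bool (fst (tr ! 1) = 1)" for tr
    unfolding g_def using \<open>0 < dG\<close> by (rule lin_feedback_second_state_features)
  have "\<exists>w<2 ^ m. m * sqrt K / 16 \<le> expected_regret (hard_transition c m w) nA 2 0 g
      (Alg (Suc m, dG, 2, nA, 2, 0, psi, second_state_features)) K"
  proof (rule hard_mean_regret_lower_bound[OF K nA_def, where nS = 2 and \<beta> = 1])
    fix w j :: nat and pol :: policy and tr
    show "value_of (hard_transition c m w) nA 2 0 g pol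
      = measure_pmf.expectation (first_action nA pol 0) (hard_mean (1 / (4 * sqrt K)) m w)"
      using value_of_hard_transition[OF \<open>0 < nA\<close> c(1,2) g_eq] by (simp add: c_def)
    show "1 - 1 / (4 * K) \<le> hellinger_affinity (trajs 2 nA 2)
      (run_episode (hard_transition c m w) nA pol 2 [] 0)
      (run_episode (hard_transition c m (flip_bit j w)) nA pol 2 [] 0)"
      using run_episode_hard_transition_affinity_ge[OF \<open>0 < nA\<close> c(1,2)] c(4) by simp
    show "1 \<le> hellinger_affinity UNIV (bernoulli_pmf (g tr)) (bernoulli_pmf (g tr))"
      by (simp add: hellinger_affinity_self)
  qed (use set_pmf_hard_transition K(1) in \<open>auto simp: transitions_within_def g_eq\<close>)
  then obtain w where regret: "m * sqrt K / 16 \<le> expected_regret (hard_transition c m w) nA 2 0 g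
      (Alg (Suc m, dG, 2, nA, 2, 0, psi, second_state_features)) K"
    by blast
  have "linear_mixture (Suc m) 2 nA psi (sign_vector (2 * sqrt m * c) w) (hard_transition c m w) B"
    unfolding psi_def using \<open>0 < m\<close> \<open>2 \<le> B\<close> c by (intro linear_mixture_hard_transition) auto
  moreover have "linear_feedback dG 2 nA 2 second_state_features unit_vector B"
    using \<open>2 \<le> B\<close> \<open>0 < dG\<close> by (intro linear_feedback_second_state) auto
  ultimately show ?thesis
    unfolding admits_hard_instance_def using regret[unfolded g_def]
    by (intro exI[of _ 2] exI[of _ nA] exI[of _ 2] exI[of _ 0] exI[of _ psi]
        exI[of _ "sign_vector (2 * sqrt m * c) w"] exI[of _ "hard_transition c m w"]
        exI[of _ second_state_features] exI[of _ unit_vector])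
      (simp add: nA_def)
qed

lemma admits_hard_instance_rate:
  fixes dP dG K m :: nat
  assumes "admits_hard_instance Alg B dP dG K (m * sqrt K / 16)" "dP + dG \<le> 4 * m"
  shows "admits_hard_instance Alg B dP dG K (1/64 * (real dP + real dG) * sqrt K)"
proof (rule admits_hard_instance_mono[OF assms(1)])
  have "(real dP + real dG) * sqrt K \<le> (4 * real m) * sqrt K"
    using assms(2) by (intro mult_right_mono) auto
  then show "1/64 * (real dP + real dG) * sqrt K \<le> m * sqrt K / 16"
    by (simp add: field_simps)
qed

lemma admits_hard_instance_sqrt_rate:
  fixes dP dG K :: nat
  assumes "2 \<le> B" "2 \<le> dP" "2 \<le> dG" and K: "(real dP + real dG)\<^sup>2 \<le> K"
  shows "admits_hard_instance Alg B dP dG K (1/64 * (real dP + real dG) * sqrt K)"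
proof -
  have square_le: "real n * real n \<le> K" if "n \<le> dP + dG" for n
  proof -
    have "real n * real n \<le> (real dP + real dG) * (real dP + real dG)"
      using that by (intro mult_mono) auto
    then show ?thesis
      using K by (simp add: power2_eq_square)
  qed
  have "0 < K"
    using square_le[of 1] \<open>2 \<le> dP\<close> by simp
  show ?thesis
  proof (cases "dP \<le> dG")
    case True
    define m where "m = dG - 1"
    have "dG = Suc m" "dP + dG \<le> 4 * m"
      using True \<open>2 \<le> dG\<close> by (auto simp: m_def)
    then show ?thesis
      using feedback_hard_instance[OF \<open>0 < K\<close> square_le \<open>2 \<le> B\<close>, of m dP] \<open>2 \<le> dP\<close>
      by (intro admits_hard_instance_rate) auto
  next
    case False
    define m where "m = dP - 1"
    have "dP = Suc m" "dP + dG \<le> 4 * m" "0 < m"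
      using False \<open>2 \<le> dP\<close> by (auto simp: m_def)
    then show ?thesis
      using transition_hard_instance[OF \<open>0 < K\<close> square_le _ \<open>2 \<le> B\<close>, of m dG] \<open>2 \<le> dG\<close>
      by (intro admits_hard_instance_rate) auto
  qed
qed

theorem theorem4p5:
  shows "\<exists>c>0. \<exists>C::real. \<forall>(B::real) (dP::nat) (dG::nat) (K::nat).
    B \<ge> 2 \<longrightarrow> dP \<ge> 2 \<longrightarrow> dG \<ge> 2 \<longrightarrow> real K \<ge> C * (real dP + real dG)\<^sup>2 \<longrightarrow>
    (\<forall>Alg::algorithm. \<exists>nS nA H s1 psi theta P phi w.
       0 < nS \<and> 0 < nA \<and> 0 < H \<and> s1 < nS \<and>
       linear_mixture dP nS nA psi theta P B \<and>
       linear_feedback dG nS nA H phi w B \<and>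
       expected_regret P nA H s1 (lin_feedback dG phi w)
         (Alg (dP, dG, nS, nA, H, s1, psi, phi)) K
       \<ge> c * (real dP + real dG) * sqrt (real K))"
  by (rule exI[of _ "1/64"], intro conjI exI[of _ "1 :: real"] allI impI)
    (simp, rule admits_hard_instance_sqrt_rate[unfolded admits_hard_instance_def], simp_all)

end
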